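(* Let $g:\mathbb{R}^m\to\overline{\mathbb{R}}$ be a polyhedral function and $(\bar z,\bar\lambda)\in\mathrm{gph}\,\partial g$. Then: (a) there exists $r>0$ such that for all $(z,\lambda)\in(\mathrm{gph}\,\partial g)\cap\mathbb{B}_r(\bar z,\bar\lambda)$, $$K_g(z,\lambda)\subset K_g(\bar z,\bar\lambda)-K_g(\bar z,\bar\lambda)\quad\text{and}\quad K_g(\bar z,\bar\lambda)\cap -K_g(\bar z,\bar\lambda)\subset K_g(z,\lambda);$$ (b) if in addition $\bar\lambda\in\mathrm{ri}\,\partial g(\bar z)$, then there exists $r>0$ such that for all $(z,\lambda)\in(\mathrm{gph}\,\partial g)\cap\mathbb{B}_r(\bar z,\bar\lambda)$ we have $\lambda\in\mathrm{ri}\,\partial g(z)$ and $K_g(z,\lambda)=K_g(\bar z,\bar\lambda)$.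
   Context: A proper function $g:\mathbb{R}^m\to\overline{\mathbb{R}}$ is polyhedral if its epigraph is a polyhedral convex set; $\partial g$ is the convex-analysis subdifferential and $\mathrm{ri}$ denotes relative interior. For $z$ with $g(z)$ finite, ${\rm d} g(z)(w)=\liminf_{t\searrow 0,\,w'\to w}\frac{g(z+tw')-g(z)}{t}$, and for $\lambda\in\partial g(z)$ the critical cone is $K_g(z,\lambda)=\{w\mid\langle\lambda,w\rangle={\rm d} g(z)(w)\}$ (equal to $N_{\partial g(z)}(\lambda)$ for convex $g$). $\mathbb{B}_r(\cdot)$ denotes a closed ball in $\mathbb{R}^m\times\mathbb{R}^m$ with the Euclidean product norm. *)

theory Defs
  imports "HOL-Analysis.Analysis"
begin

definition proper_fun :: "('a \<Rightarrow> ereal) \<Rightarrow> bool" where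
  "proper_fun g \<longleftrightarrow> (\<forall>x. g x \<noteq> -\<infinity>) \<and> (\<exists>x. g x \<noteq> \<infinity>)"

definition epigraph :: "('a \<Rightarrow> ereal) \<Rightarrow> ('a \<times> real) set" where
  "epigraph g = {(x, t). g x \<le> ereal t}"

definition polyhedral_fun :: "('a::euclidean_space \<Rightarrow> ereal) \<Rightarrow> bool" where
  "polyhedral_fun g \<longleftrightarrow> proper_fun g \<and> polyhedron (epigraph g)"

definition subdiff :: "('a::real_inner \<Rightarrow> ereal) \<Rightarrow> 'a \<Rightarrow> 'a set" where
  "subdiff g z = {l. \<bar>g z\<bar> \<noteq> \<infinity> \<and> (\<forall>w. g w \<ge> g z + ereal (l \<bullet> (w - z)))}"

definition subderiv :: "('a::real_normed_vector \<Rightarrow> ereal) \<Rightarrow> 'a \<Rightarrow> 'a \<Rightarrow> ereal" where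
  "subderiv g z w = Liminf (at (0, w) within ({0<..} \<times> UNIV))
      (\<lambda>(t::real, w'). (g (z + t *\<^sub>R w') - g z) / ereal t)"

definition crit_cone :: "('a::real_inner \<Rightarrow> ereal) \<Rightarrow> 'a \<Rightarrow> 'a \<Rightarrow> 'a set" where
  "crit_cone g z l = {w. ereal (l \<bullet> w) = subderiv g z w}"

end

theory Submission
  imports Defs
begin

text \<open>A polyhedral \<open>g\<close> is the maximum of finitely many affine functions \<open>a\<^sub>i \<bullet> x + b\<^sub>i\<close> on a
  polyhedron \<open>{x. c\<^sub>j \<bullet> x \<le> d\<^sub>j}\<close> and \<open>\<infinity>\<close> outside. At \<open>z\<close> everything is governed by the set
  \<open>A(z)\<close> of active pieces and the set \<open>C(z)\<close> of tight constraints: \<open>dg(z)(w)\<close> is the maximum of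
  \<open>a\<^sub>i \<bullet> w\<close> over \<open>i \<in> A(z)\<close> on the tangent cone \<open>T(z) = {w. c\<^sub>j \<bullet> w \<le> 0 for j \<in> C(z)}\<close> and \<open>\<infinity>\<close>
  off it, and \<open>\<partial>g(z) = {\<lambda>. \<lambda> \<bullet> w \<le> dg(z)(w) for w \<in> T(z)}\<close>.

  Near \<open>z\<^sub>b\<close> the index sets can only shrink, so \<open>\<partial>g(z) \<subseteq> \<partial>g(z\<^sub>b)\<close>, and \<open>z - z\<^sub>b \<in> K(z\<^sub>b, \<lambda>)\<close> for
  \<open>\<lambda> \<in> \<partial>g(z)\<close>. Adding a large multiple of \<open>z - z\<^sub>b\<close> to \<open>w \<in> K(z, \<lambda>)\<close> lands in \<open>K(z\<^sub>b, \<lambda>)\<close>, and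
  \<open>K(z\<^sub>b, \<lambda>) \<subseteq> K(z\<^sub>b, \<lambda>\<^sub>b)\<close> for \<open>\<lambda>\<close> near \<open>\<lambda>\<^sub>b\<close> because the epigraph of \<open>dg(z\<^sub>b)\<close> has only finitely
  many faces; this gives (a). If \<open>\<lambda>\<^sub>b \<in> ri \<partial>g(z\<^sub>b)\<close>, every \<open>a\<^sub>i\<close> with \<open>i \<in> A(z\<^sub>b)\<close> agrees with \<open>\<lambda>\<^sub>b\<close>
  and every \<open>c\<^sub>j\<close> with \<open>j \<in> C(z\<^sub>b)\<close> vanishes on \<open>K(z\<^sub>b, \<lambda>\<^sub>b)\<close>; applied to \<open>z - z\<^sub>b\<close> this forces
  \<open>A(z) = A(z\<^sub>b)\<close> and \<open>C(z) = C(z\<^sub>b)\<close>, hence \<open>\<partial>g(z) = \<partial>g(z\<^sub>b)\<close> and (b).\<close>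

lemma eventually_nhds_Pair:
  assumes "eventually P (nhds a)" and "eventually Q (nhds b)"
  shows "eventually (\<lambda>(x, y). P x \<and> Q y) (nhds (a, b))"
  unfolding nhds_prod case_prod_unfold by (rule eventually_prodI[OF assms])

lemma eventually_nhds_Pair_imp_cball:
  fixes a :: "'a::metric_space" and b :: "'b::metric_space"
  assumes "eventually (\<lambda>(x, y). Q x y \<longrightarrow> P x y) (nhds (a, b))"
  shows "\<exists>r>0. \<forall>x y. (x, y) \<in> cball (a, b) r \<and> Q x y \<longrightarrow> P x y"
  using assms unfolding eventually_nhds_metric_le by (force simp: dist_commute)

lemma eventually_mem_imp_mem_closed:
  assumes "finite \<F>" and "\<And>X. X \<in> \<F> \<Longrightarrow> closed X"
  shows "eventually (\<lambda>y. \<forall>X\<in>\<F>. y \<in> X \<longrightarrow> x \<in> X) (nhds x)"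
proof -
  have "eventually (\<lambda>y. y \<in> X \<longrightarrow> x \<in> X) (nhds x)" if "X \<in> \<F>" for X
  proof (cases "x \<in> X")
    case False
    then have "eventually (\<lambda>y. y \<in> - X) (nhds x)"
      using assms(2)[OF that] by (intro eventually_nhds_in_open) (auto simp: open_Compl)
    then show ?thesis by eventually_elim auto
  qed simp
  then show ?thesis using assms(1) by (intro eventually_ball_finite) auto
qed

lemma eventually_mem_rel_interior:
  fixes S :: "'a::euclidean_space set"
  assumes "x \<in> rel_interior S"
  shows "eventually (\<lambda>y. y \<in> S \<longrightarrow> y \<in> rel_interior S) (nhds x)"
proof -
  obtain U where "open U" and U: "rel_interior S = U \<inter> affine hull S"
    using openin_rel_interior[of S] unfolding openin_open by blast
  then have "eventually (\<lambda>y. y \<in> U) (nhds x)"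
    using assms by (intro eventually_nhds_in_open) auto
  then show ?thesis
  proof eventually_elim
    case (elim y)
    show ?case using elim U hull_subset[of S affine] by blast
  qed
qed

lemma rel_interior_maximizer_inner_eq:
  fixes S :: "'a::euclidean_space set"
  assumes "convex S" and x: "x \<in> rel_interior S" and y: "y \<in> S" and max: "\<And>u. u \<in> S \<Longrightarrow> u \<bullet> w \<le> x \<bullet> w"
  shows "y \<bullet> w = x \<bullet> w"
proof -
  obtain e where e: "1 < e" "(1 - e) *\<^sub>R y + e *\<^sub>R x \<in> S"
    using x y convex_rel_interior_iff[OF \<open>convex S\<close>] by blast
  then have "(1 - e) * (y \<bullet> w) + e * (x \<bullet> w) \<le> x \<bullet> w" using max[of "(1 - e) *\<^sub>R y + e *\<^sub>R x"]
    by (simp add: inner_add_left)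
  then have "(1 - e) * (y \<bullet> w - x \<bullet> w) \<le> 0" by (simp add: algebra_simps)
  then have "x \<bullet> w \<le> y \<bullet> w" using e(1) by (simp add: mult_le_0_iff)
  with max[OF y] show ?thesis by linarith
qed

lemma eventually_affine_le_at_top:
  fixes \<alpha> \<beta> \<gamma> :: real
  assumes "\<beta> < 0"
  shows "eventually (\<lambda>s. \<alpha> + s * \<beta> \<le> \<gamma>) at_top"
  using eventually_ge_at_top[of "(\<gamma> - \<alpha>) / \<beta>"]
proof eventually_elim
  case (elim s)
  then have "s * \<beta> \<le> \<gamma> - \<alpha>" using assms by (simp add: neg_divide_le_eq)
  then show ?case by simp
qed

lemma filterlim_ray_at_within_pos:
  "filterlim (\<lambda>t::real. (t, w)) (at (0, w) within ({0<..} \<times> UNIV)) (at_right 0)"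
proof -
  have "((\<lambda>t::real. (t, w)) \<longlongrightarrow> (0, w)) (at_right 0)"
    by (intro tendsto_Pair tendsto_ident_at tendsto_const)
  moreover have "\<forall>\<^sub>F t in at_right (0::real). (t, w) \<in> {0<..} \<times> UNIV \<and> (t, w) \<noteq> (0, w)"
    unfolding eventually_at_filter by (intro always_eventually allI impI) auto
  ultimately show ?thesis unfolding filterlim_at by blast
qed

lemma at_within_pos_neq_bot: "at (0::real, w) within ({0<..} \<times> UNIV) \<noteq> bot"
proof
  assume "at (0::real, w) within ({0<..} \<times> UNIV) = bot"
  then have "eventually (\<lambda>_. False) (at (0::real, w) within ({0<..} \<times> UNIV))" by simp
  then have "eventually (\<lambda>_. False) (at_right (0::real))"
    using filterlim_ray_at_within_pos[of w] unfolding filterlim_iff by blast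
  then show False by simp
qed

lemma eventually_at_within_pos_fst: "eventually (\<lambda>p. 0 < fst p) (at (0::real, w) within ({0<..} \<times> UNIV))"
  unfolding eventually_at_filter by (intro always_eventually) auto

lemma tendsto_snd_at_within_pos: "(snd \<longlongrightarrow> w) (at (0::real, w) within ({0<..} \<times> UNIV))"
proof -
  have "(snd \<longlongrightarrow> snd (0::real, w)) (at (0::real, w) within ({0<..} \<times> UNIV))"
    by (intro tendsto_snd tendsto_ident_at)
  then show ?thesis by simp
qed

lemma Liminf_at_within_pos_le:
  fixes q :: "real \<times> 'a::real_normed_vector \<Rightarrow> 'b::complete_linorder"
  assumes "eventually (\<lambda>t. q (t, w) \<le> y) (at_right 0)"
  shows "Liminf (at (0, w) within ({0<..} \<times> UNIV)) q \<le> y"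
proof (rule Liminf_least)
  fix P :: "real \<times> 'a \<Rightarrow> bool"
  assume "eventually P (at (0, w) within ({0<..} \<times> UNIV))"
  then have "eventually (\<lambda>t. P (t, w)) (at_right 0)"
    using filterlim_ray_at_within_pos unfolding filterlim_iff by blast
  then obtain t where "P (t, w)" "q (t, w) \<le> y"
    using eventually_happens'[OF trivial_limit_at_right_real eventually_conj[OF _ assms]] by blast
  then show "(INF p\<in>Collect P. q p) \<le> y" by (intro INF_lower2) auto
qed

locale max_affine_polyhedral =
  fixes I J :: "'i set"
    and a :: "'i \<Rightarrow> 'a::euclidean_space" and b :: "'i \<Rightarrow> real"
    and c :: "'i \<Rightarrow> 'a" and d :: "'i \<Rightarrow> real"
  assumes finite_I: "finite I" and I_nonempty: "I \<noteq> {}" and finite_J: "finite J"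
begin

definition feasible :: "'a set" where
  "feasible = {x. \<forall>j\<in>J. c j \<bullet> x \<le> d j}"

definition pmax :: "'a \<Rightarrow> real" where
  "pmax x = Max ((\<lambda>i. a i \<bullet> x + b i) ` I)"

definition f :: "'a \<Rightarrow> ereal" where
  "f x = (if x \<in> feasible then ereal (pmax x) else \<infinity>)"

definition active :: "'a \<Rightarrow> 'i set" where
  "active z = {i\<in>I. a i \<bullet> z + b i = pmax z}"

definition tight :: "'a \<Rightarrow> 'i set" where
  "tight z = {j\<in>J. c j \<bullet> z = d j}"

definition tangent :: "'a \<Rightarrow> 'a set" where
  "tangent z = {w. \<forall>j\<in>tight z. c j \<bullet> w \<le> 0}"

definition dir_deriv :: "'a \<Rightarrow> 'a \<Rightarrow> real" where
  "dir_deriv z w = Max ((\<lambda>i. a i \<bullet> w) ` active z)"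

lemma pmax_ge: "i \<in> I \<Longrightarrow> a i \<bullet> x + b i \<le> pmax x"
  unfolding pmax_def using finite_I by (intro Max_ge) auto

lemma active_subset: "active z \<subseteq> I"
  unfolding active_def by auto

lemma finite_active: "finite (active z)"
  using finite_I finite_subset[OF active_subset] by blast

lemma active_nonempty: "active z \<noteq> {}"
proof -
  have "pmax z \<in> (\<lambda>i. a i \<bullet> z + b i) ` I"
    unfolding pmax_def using finite_I I_nonempty by (intro Max_in) auto
  then show ?thesis unfolding active_def by auto
qed

lemma finite_tight: "finite (tight z)"
  using finite_J unfolding tight_def by auto

lemma dir_deriv_ge: "i \<in> active z \<Longrightarrow> a i \<bullet> w \<le> dir_deriv z w"
  unfolding dir_deriv_def using finite_active by (intro Max_ge) auto

lemma dir_deriv_attained: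
  obtains i where "i \<in> active z" "a i \<bullet> w = dir_deriv z w"
proof -
  have "dir_deriv z w \<in> (\<lambda>i. a i \<bullet> w) ` active z"
    unfolding dir_deriv_def using finite_active active_nonempty by (intro Max_in) auto
  then show ?thesis using that by auto
qed

lemma dir_deriv_le:
  assumes "\<And>i. i \<in> active z \<Longrightarrow> a i \<bullet> w \<le> m"
  shows "dir_deriv z w \<le> m"
proof -
  obtain i where "i \<in> active z" "a i \<bullet> w = dir_deriv z w" by (rule dir_deriv_attained)
  then show ?thesis using assms by force
qed

lemma dir_deriv_zero [simp]: "dir_deriv z 0 = 0"
  by (metis dir_deriv_attained inner_zero_right)

lemma eventually_feasible_along_tangent:
  assumes z: "z \<in> feasible" and w: "w \<in> tangent z"
  shows "eventually (\<lambda>t. z + t *\<^sub>R w \<in> feasible) (at_right 0)"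
proof -
  have "eventually (\<lambda>t. c j \<bullet> (z + t *\<^sub>R w) \<le> d j) (at_right 0)" if j: "j \<in> J" for j
  proof (cases "j \<in> tight z")
    case True
    then have cz: "c j \<bullet> z = d j" and cw: "c j \<bullet> w \<le> 0" using w unfolding tight_def tangent_def by auto
    show ?thesis using eventually_at_right_less[of 0]
      by (rule eventually_mono) (simp add: inner_add_right cz cw mult_nonneg_nonpos)
  next
    case False
    then have "c j \<bullet> z < d j" using z j unfolding tight_def feasible_def by force
    moreover have "((\<lambda>t. c j \<bullet> z + t * (c j \<bullet> w)) \<longlongrightarrow> c j \<bullet> z + 0 * (c j \<bullet> w)) (at_right 0)"
      by (intro tendsto_intros)
    ultimately have "eventually (\<lambda>t. c j \<bullet> z + t * (c j \<bullet> w) < d j) (at_right 0)"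
      by (intro order_tendstoD) auto
    then show ?thesis by eventually_elim (auto simp: inner_add_right)
  qed
  then have "eventually (\<lambda>t. \<forall>j\<in>J. c j \<bullet> (z + t *\<^sub>R w) \<le> d j) (at_right 0)"
    using finite_J by (intro eventually_ball_finite) auto
  then show ?thesis by (rule eventually_mono) (simp add: feasible_def)
qed

lemma eventually_pmax_along_le:
  "eventually (\<lambda>t. pmax (z + t *\<^sub>R w) \<le> pmax z + t * dir_deriv z w) (at_right 0)"
proof -
  have "eventually (\<lambda>t. 0 < t \<longrightarrow> a i \<bullet> (z + t *\<^sub>R w) + b i \<le> pmax z + t * dir_deriv z w)
      (at_right 0)" if i: "i \<in> I" for i
  proof (cases "i \<in> active z")
    case True
    then have on: "a i \<bullet> z + b i = pmax z" and slope: "a i \<bullet> w \<le> dir_deriv z w"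
      using dir_deriv_ge unfolding active_def by auto
    show ?thesis
    proof (intro always_eventually allI impI)
      fix t :: real assume "0 < t"
      then have "t * (a i \<bullet> w) \<le> t * dir_deriv z w" using slope by (intro mult_left_mono) auto
      then show "a i \<bullet> (z + t *\<^sub>R w) + b i \<le> pmax z + t * dir_deriv z w"
        using on by (simp add: inner_add_right)
    qed
  next
    case False
    then have "a i \<bullet> z + b i < pmax z" using pmax_ge[OF i, of z] i unfolding active_def by force
    moreover have "((\<lambda>t. a i \<bullet> z + b i + t * (a i \<bullet> w - dir_deriv z w))
        \<longlongrightarrow> a i \<bullet> z + b i + 0 * (a i \<bullet> w - dir_deriv z w)) (at_right 0)"
      by (intro tendsto_intros)
    ultimately have "eventually (\<lambda>t. a i \<bullet> z + b i + t * (a i \<bullet> w - dir_deriv z w) < pmax z)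
        (at_right 0)"
      by (intro order_tendstoD) auto
    then show ?thesis by eventually_elim (auto simp: inner_add_right algebra_simps)
  qed
  then have "eventually (\<lambda>t. \<forall>i\<in>I. 0 < t \<longrightarrow>
      a i \<bullet> (z + t *\<^sub>R w) + b i \<le> pmax z + t * dir_deriv z w) (at_right 0)"
    using finite_I by (intro eventually_ball_finite) auto
  then show ?thesis using eventually_at_right_less[of 0]
  proof eventually_elim
    case (elim t)
    then show ?case unfolding pmax_def[of "z + t *\<^sub>R w"] using finite_I I_nonempty by (subst Max_le_iff) auto
  qed
qed

lemma subdiff_imp_feasible:
  assumes "l \<in> subdiff f z"
  shows "z \<in> feasible"
proof -
  have "\<bar>f z\<bar> \<noteq> \<infinity>" using assms unfolding subdiff_def by simp
  then show ?thesis unfolding f_def by (auto split: if_splits)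
qed

lemma subdiff_le_dir_deriv:
  assumes l: "l \<in> subdiff f z" and w: "w \<in> tangent z"
  shows "l \<bullet> w \<le> dir_deriv z w"
proof -
  have z: "z \<in> feasible" using l by (rule subdiff_imp_feasible)
  have "eventually (\<lambda>t. 0 < t \<and> z + t *\<^sub>R w \<in> feasible \<and>
      pmax (z + t *\<^sub>R w) \<le> pmax z + t * dir_deriv z w) (at_right 0)"
    using eventually_at_right_less[of "0::real"] eventually_feasible_along_tangent[OF z w]
      eventually_pmax_along_le[of z w]
    by eventually_elim simp
  then obtain t where t: "0 < t" "z + t *\<^sub>R w \<in> feasible" "pmax (z + t *\<^sub>R w) \<le> pmax z + t * dir_deriv z w"
    using eventually_happens'[OF trivial_limit_at_right_real] by blast
  have "\<forall>y. f z + ereal (l \<bullet> (y - z)) \<le> f y" using l unfolding subdiff_def by blast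
  then have "f z + ereal (l \<bullet> (z + t *\<^sub>R w - z)) \<le> f (z + t *\<^sub>R w)" by blast
  then have "pmax z + t * (l \<bullet> w) \<le> pmax (z + t *\<^sub>R w)" using z t unfolding f_def by auto
  with t have "t * (l \<bullet> w) \<le> t * dir_deriv z w" by linarith
  with t show ?thesis by simp
qed

lemma mem_subdiff_if_le_dir_deriv:
  assumes z: "z \<in> feasible" and l: "\<And>w. w \<in> tangent z \<Longrightarrow> l \<bullet> w \<le> dir_deriv z w"
  shows "l \<in> subdiff f z"
proof -
  have "f z + ereal (l \<bullet> (y - z)) \<le> f y" for y
  proof (cases "y \<in> feasible")
    case False then show ?thesis unfolding f_def by simp
  next
    case True
    have "y - z \<in> tangent z"
      using True unfolding tangent_def tight_def feasible_def by (auto simp: inner_diff_right)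
    then have le: "l \<bullet> (y - z) \<le> dir_deriv z (y - z)" by (rule l)
    obtain i where i: "i \<in> active z" "a i \<bullet> (y - z) = dir_deriv z (y - z)"
      by (rule dir_deriv_attained)
    then have "a i \<bullet> y + b i = pmax z + dir_deriv z (y - z)"
      unfolding active_def by (auto simp: inner_diff_right)
    moreover have "a i \<bullet> y + b i \<le> pmax y" using i active_subset pmax_ge by blast
    ultimately show ?thesis using True z le unfolding f_def by simp
  qed
  moreover have "\<bar>f z\<bar> \<noteq> \<infinity>" using z unfolding f_def by simp
  ultimately show ?thesis unfolding subdiff_def by simp
qed

lemma subdiff_eq: "subdiff f z = {l. z \<in> feasible \<and> (\<forall>w\<in>tangent z. l \<bullet> w \<le> dir_deriv z w)}"
  using subdiff_imp_feasible subdiff_le_dir_deriv mem_subdiff_if_le_dir_deriv by blast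

lemma diff_quotient_eq:
  assumes "z \<in> feasible" and "0 < t"
  shows "(f (z + t *\<^sub>R w) - f z) / ereal t =
    (if z + t *\<^sub>R w \<in> feasible then ereal ((pmax (z + t *\<^sub>R w) - pmax z) / t) else \<infinity>)"
  using assms unfolding f_def by auto

lemma diff_quotient_ge_active:
  assumes z: "z \<in> feasible" and t: "0 < t" and i: "i \<in> active z"
  shows "ereal (a i \<bullet> w) \<le> (f (z + t *\<^sub>R w) - f z) / ereal t"
proof (cases "z + t *\<^sub>R w \<in> feasible")
  case True
  have "a i \<bullet> (z + t *\<^sub>R w) + b i \<le> pmax (z + t *\<^sub>R w)" using i active_subset pmax_ge by blast
  then have "t * (a i \<bullet> w) \<le> pmax (z + t *\<^sub>R w) - pmax z"
    using i unfolding active_def by (simp add: inner_add_right)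
  then show ?thesis using True diff_quotient_eq[OF z t] t by (simp add: pos_le_divide_eq mult.commute)
qed (simp add: diff_quotient_eq[OF z t])

lemma diff_quotient_infinite:
  assumes z: "z \<in> feasible" and t: "0 < t" and j: "j \<in> tight z" and w: "0 < c j \<bullet> w"
  shows "(f (z + t *\<^sub>R w) - f z) / ereal t = \<infinity>"
proof -
  have "d j < c j \<bullet> (z + t *\<^sub>R w)" using j w t unfolding tight_def by (simp add: inner_add_right)
  then have "z + t *\<^sub>R w \<notin> feasible" using j unfolding feasible_def tight_def by force
  then show ?thesis by (simp add: diff_quotient_eq[OF z t])
qed

lemma subderiv_tangent:
  assumes z: "z \<in> feasible" and w: "w \<in> tangent z"
  shows "subderiv f z w = ereal (dir_deriv z w)"
proof -
  define F where "F = at (0::real, w) within ({0<..} \<times> UNIV)"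
  define q where "q = (\<lambda>(t::real, w'). (f (z + t *\<^sub>R w') - f z) / ereal t)"
  have F: "F \<noteq> bot" unfolding F_def by (rule at_within_pos_neq_bot)
  obtain i where i: "i \<in> active z" "a i \<bullet> w = dir_deriv z w" by (rule dir_deriv_attained)
  have "((\<lambda>p. ereal (a i \<bullet> snd p)) \<longlongrightarrow> ereal (a i \<bullet> w)) F"
    unfolding F_def by (intro tendsto_ereal tendsto_inner tendsto_const tendsto_snd_at_within_pos)
  from lim_imp_Liminf[OF F this]
  have "ereal (dir_deriv z w) = Liminf F (\<lambda>p. ereal (a i \<bullet> snd p))" using i(2) by simp
  also have "\<dots> \<le> Liminf F q"
    using eventually_at_within_pos_fst[of w] unfolding F_def
  proof (intro Liminf_mono, eventually_elim)
    case (elim p)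
    then show ?case using diff_quotient_ge_active[OF z _ i(1)] by (cases p) (simp add: q_def)
  qed
  finally have "ereal (dir_deriv z w) \<le> Liminf F q" .
  moreover have "Liminf F q \<le> ereal (dir_deriv z w)"
    unfolding F_def
    using eventually_at_right_less[of "0::real"] eventually_feasible_along_tangent[OF z w]
      eventually_pmax_along_le[of z w]
  proof (intro Liminf_at_within_pos_le, eventually_elim)
    case (elim t)
    then have "(pmax (z + t *\<^sub>R w) - pmax z) / t \<le> dir_deriv z w"
      by (simp add: pos_divide_le_eq mult.commute)
    then show ?case using elim by (simp add: q_def diff_quotient_eq[OF z])
  qed
  ultimately show ?thesis unfolding subderiv_def F_def q_def by simp
qed

lemma subderiv_not_tangent:
  assumes z: "z \<in> feasible" and w: "w \<notin> tangent z"
  shows "subderiv f z w = \<infinity>"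
proof -
  define F where "F = at (0::real, w) within ({0<..} \<times> UNIV)"
  define q where "q = (\<lambda>(t::real, w'). (f (z + t *\<^sub>R w') - f z) / ereal t)"
  obtain j where j: "j \<in> tight z" "0 < c j \<bullet> w" using w unfolding tangent_def by force
  have "((\<lambda>p. c j \<bullet> snd p) \<longlongrightarrow> c j \<bullet> w) F"
    unfolding F_def by (intro tendsto_inner tendsto_const tendsto_snd_at_within_pos)
  then have "eventually (\<lambda>p. 0 < c j \<bullet> snd p) F" using j(2) by (rule order_tendstoD)
  with eventually_at_within_pos_fst[of w] have "eventually (\<lambda>p. q p = \<infinity>) F"
    unfolding F_def
  proof eventually_elim
    case (elim p)
    then show ?case using diff_quotient_infinite[OF z _ j(1)] by (cases p) (simp add: q_def)
  qed
  then have "Liminf F q = Liminf F (\<lambda>_. \<infinity>)" by (rule Liminf_eq)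
  also have "\<dots> = \<infinity>" by (rule Liminf_const) (simp add: F_def at_within_pos_neq_bot)
  finally show ?thesis unfolding subderiv_def F_def q_def by simp
qed

lemma crit_cone_eq:
  assumes "z \<in> feasible"
  shows "crit_cone f z l = {w \<in> tangent z. l \<bullet> w = dir_deriv z w}"
proof (intro set_eqI)
  show "w \<in> crit_cone f z l \<longleftrightarrow> w \<in> {w \<in> tangent z. l \<bullet> w = dir_deriv z w}" for w
    unfolding crit_cone_def
    by (cases "w \<in> tangent z") (simp_all add: subderiv_tangent[OF assms] subderiv_not_tangent[OF assms])
qed

lemma eventually_active_tight_subset:
  assumes zb: "zb \<in> feasible"
  shows "eventually (\<lambda>z. active z \<subseteq> active zb \<and> tight z \<subseteq> tight zb) (nhds zb)"
proof -
  obtain k where k: "k \<in> active zb" using active_nonempty by blast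
  have inactive: "eventually (\<lambda>z. i \<notin> active z) (nhds zb)" if i: "i \<in> I - active zb" for i
  proof -
    have "a i \<bullet> zb + b i < pmax zb" using i pmax_ge[of i zb] unfolding active_def by force
    then have "0 < (a k \<bullet> zb + b k) - (a i \<bullet> zb + b i)" using k unfolding active_def by auto
    moreover have "((\<lambda>z. (a k \<bullet> z + b k) - (a i \<bullet> z + b i))
        \<longlongrightarrow> (a k \<bullet> zb + b k) - (a i \<bullet> zb + b i)) (nhds zb)"
      by (intro tendsto_intros filterlim_ident)
    ultimately have "eventually (\<lambda>z. 0 < (a k \<bullet> z + b k) - (a i \<bullet> z + b i)) (nhds zb)"
      by (intro order_tendstoD) auto
    then show ?thesis
    proof eventually_elim
      case (elim z)
      have "a k \<bullet> z + b k \<le> pmax z" using k active_subset pmax_ge by blast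
      then show ?case using elim unfolding active_def by auto
    qed
  qed
  have slack: "eventually (\<lambda>z. j \<notin> tight z) (nhds zb)" if j: "j \<in> J - tight zb" for j
  proof -
    have "c j \<bullet> zb < d j" using j zb unfolding feasible_def tight_def by force
    moreover have "((\<lambda>z. c j \<bullet> z) \<longlongrightarrow> c j \<bullet> zb) (nhds zb)"
      by (intro tendsto_intros filterlim_ident)
    ultimately have "eventually (\<lambda>z. c j \<bullet> z < d j) (nhds zb)"
      by (intro order_tendstoD) auto
    then show ?thesis by (rule eventually_mono) (auto simp: tight_def)
  qed
  have "eventually (\<lambda>z. \<forall>i\<in>I - active zb. i \<notin> active z) (nhds zb)"
    using inactive finite_I by (intro eventually_ball_finite) auto
  moreover have "eventually (\<lambda>z. \<forall>j\<in>J - tight zb. j \<notin> tight z) (nhds zb)"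
    using slack finite_J by (intro eventually_ball_finite) auto
  ultimately show ?thesis
    by eventually_elim (auto simp: active_def tight_def)
qed

lemma convex_subdiff: "convex (subdiff f z)"
proof (cases "z \<in> feasible")
  case True
  then have "subdiff f z = (\<Inter>w\<in>tangent z. {l. w \<bullet> l \<le> dir_deriv z w})"
    unfolding subdiff_eq by (auto simp: inner_commute)
  then show ?thesis by (auto intro!: convex_INT convex_halfspace_le)
qed (simp add: subdiff_eq)

lemma crit_cone_inner_eq_if_rel_interior:
  assumes zb: "zb \<in> feasible" and lb: "lb \<in> rel_interior (subdiff f zb)" and w: "w \<in> crit_cone f zb lb"
  shows active_inner_eq: "i \<in> active zb \<Longrightarrow> a i \<bullet> w = lb \<bullet> w"
    and tight_inner_eq: "j \<in> tight zb \<Longrightarrow> c j \<bullet> w = 0"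
proof -
  have wT: "w \<in> tangent zb" and lw: "lb \<bullet> w = dir_deriv zb w" using w unfolding crit_cone_eq[OF zb] by auto
  have lb_in: "lb \<in> subdiff f zb" using lb rel_interior_subset by blast
  have inner_eq: "u \<bullet> w = lb \<bullet> w" if "u \<in> subdiff f zb" for u
    using convex_subdiff lb that by (rule rel_interior_maximizer_inner_eq)
      (use subdiff_le_dir_deriv[OF _ wT] lw in auto)
  show "a i \<bullet> w = lb \<bullet> w" if i: "i \<in> active zb"
    by (intro inner_eq mem_subdiff_if_le_dir_deriv[OF zb] dir_deriv_ge[OF i])
  show "c j \<bullet> w = 0" if j: "j \<in> tight zb"
  proof -
    have "lb + c j \<in> subdiff f zb"
    proof (rule mem_subdiff_if_le_dir_deriv[OF zb])
      fix v assume v: "v \<in> tangent zb"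
      have "lb \<bullet> v \<le> dir_deriv zb v" using lb_in v by (rule subdiff_le_dir_deriv)
      moreover have "c j \<bullet> v \<le> 0" using v j unfolding tangent_def by auto
      ultimately show "(lb + c j) \<bullet> v \<le> dir_deriv zb v" by (simp add: inner_add_left)
    qed
    from inner_eq[OF this] show ?thesis by (simp add: inner_add_left)
  qed
qed

lemma rel_interior_crit_cone_uminus:
  assumes zb: "zb \<in> feasible" and lb: "lb \<in> rel_interior (subdiff f zb)" and w: "w \<in> crit_cone f zb lb"
  shows "- w \<in> crit_cone f zb lb"
proof -
  have "- w \<in> tangent zb"
    using tight_inner_eq[OF zb lb w] unfolding tangent_def by simp
  moreover have "dir_deriv zb (- w) = lb \<bullet> (- w)"
  proof -
    obtain i where "i \<in> active zb" "a i \<bullet> (- w) = dir_deriv zb (- w)" by (rule dir_deriv_attained)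
    then show ?thesis using active_inner_eq[OF zb lb w] by simp
  qed
  ultimately show ?thesis unfolding crit_cone_eq[OF zb] by simp
qed

definition dir_epigraph :: "'a \<Rightarrow> ('a \<times> real) set" where
  "dir_epigraph z = {p. fst p \<in> tangent z \<and> dir_deriv z (fst p) \<le> snd p}"

lemma polyhedron_dir_epigraph: "polyhedron (dir_epigraph z)"
proof -
  have "dir_deriv z w \<le> t \<longleftrightarrow> (\<forall>i\<in>active z. a i \<bullet> w \<le> t)" for w t
    by (meson dir_deriv_le dir_deriv_ge order_trans)
  then have "dir_epigraph z =
      (\<Inter>j\<in>tight z. {p. (c j, 0) \<bullet> p \<le> 0}) \<inter> (\<Inter>i\<in>active z. {p. (a i, -1) \<bullet> p \<le> 0})"
    unfolding dir_epigraph_def tangent_def by (auto simp: inner_prod_def)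
  then show ?thesis
    using finite_tight finite_active by (auto intro!: polyhedron_Inter polyhedron_halfspace_le)
qed

lemma subdiff_exposed_face:
  assumes "l \<in> subdiff f z"
  shows "dir_epigraph z \<inter> {p. (l, -1) \<bullet> p = 0} face_of dir_epigraph z"
proof (rule face_of_Int_supporting_hyperplane_le)
  show "convex (dir_epigraph z)" by (rule polyhedron_imp_convex[OF polyhedron_dir_epigraph])
  show "(l, -1) \<bullet> p \<le> 0" if "p \<in> dir_epigraph z" for p
    using that subdiff_le_dir_deriv[OF assms, of "fst p"] unfolding dir_epigraph_def
    by (auto simp: inner_prod_def)
qed

text \<open>\<open>K(z\<^sub>b, \<lambda>)\<close> is the projection of the face of the polyhedral cone \<open>dir_epigraph z\<^sub>b\<close>
  exposed by \<open>(\<lambda>, -1)\<close>. There are finitely many faces \<open>F\<close>, and the set of \<open>\<lambda>\<close> whose hyperplane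
  contains \<open>F\<close> is closed, so any face exposed by a \<open>\<lambda>\<close> near \<open>\<lambda>\<^sub>b\<close> lies in the face exposed
  by \<open>\<lambda>\<^sub>b\<close>.\<close>

lemma eventually_crit_cone_subset:
  assumes zb: "zb \<in> feasible"
  shows "eventually (\<lambda>l. l \<in> subdiff f zb \<longrightarrow> crit_cone f zb l \<subseteq> crit_cone f zb lb) (nhds lb)"
proof -
  define E where "E = dir_epigraph zb"
  define normals where "normals F = {l. \<forall>p\<in>F. fst p \<bullet> l = snd p}" for F :: "('a \<times> real) set"
  have "closed (normals F)" for F
  proof -
    have "normals F = (\<Inter>p\<in>F. {l. fst p \<bullet> l = snd p})" unfolding normals_def by auto
    then show ?thesis by (auto intro: closed_hyperplane)
  qed
  then have "eventually (\<lambda>l. \<forall>N\<in>normals ` {F. F face_of E}. l \<in> N \<longrightarrow> lb \<in> N) (nhds lb)"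
    using finite_polyhedron_faces[OF polyhedron_dir_epigraph] unfolding E_def
    by (intro eventually_mem_imp_mem_closed) auto
  then show ?thesis
  proof eventually_elim
    case (elim l)
    show ?case
    proof (intro impI subsetI)
      assume l: "l \<in> subdiff f zb"
      define F where "F = E \<inter> {p. (l, -1) \<bullet> p = 0}"
      have "F face_of E" unfolding F_def E_def using l by (rule subdiff_exposed_face)
      moreover have "l \<in> normals F" unfolding normals_def F_def by (auto simp: inner_prod_def inner_commute)
      ultimately have lb_normal: "lb \<in> normals F" using elim by blast
      fix w assume "w \<in> crit_cone f zb l"
      then have "w \<in> tangent zb" "l \<bullet> w = dir_deriv zb w" unfolding crit_cone_eq[OF zb] by auto
      then have "(w, dir_deriv zb w) \<in> F" unfolding F_def E_def dir_epigraph_def by (simp add: inner_prod_def)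
      then have "lb \<bullet> w = dir_deriv zb w" using lb_normal unfolding normals_def by (auto simp: inner_commute)
      with \<open>w \<in> tangent zb\<close> show "w \<in> crit_cone f zb lb" unfolding crit_cone_eq[OF zb] by simp
    qed
  qed
qed

context
  fixes zb z
  assumes zb: "zb \<in> feasible" and z: "z \<in> feasible"
    and active_sub: "active z \<subseteq> active zb" and tight_sub: "tight z \<subseteq> tight zb"
begin

lemma pmax_eq_dir_deriv: "pmax z = pmax zb + dir_deriv zb (z - zb)"
proof -
  have piece_value: "a i \<bullet> z + b i = pmax zb + a i \<bullet> (z - zb)" if "i \<in> active zb" for i
    using that unfolding active_def by (auto simp: inner_diff_right)
  obtain i0 where i0: "i0 \<in> active z" using active_nonempty by blast
  obtain i1 where i1: "i1 \<in> active zb" "a i1 \<bullet> (z - zb) = dir_deriv zb (z - zb)"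
    by (rule dir_deriv_attained)
  have "pmax z = pmax zb + a i0 \<bullet> (z - zb)" using piece_value[of i0] i0 active_sub unfolding active_def by auto
  also have "\<dots> \<le> pmax zb + dir_deriv zb (z - zb)" using i0 active_sub dir_deriv_ge by auto
  finally have "pmax z \<le> pmax zb + dir_deriv zb (z - zb)" .
  moreover have "a i1 \<bullet> z + b i1 \<le> pmax z" using i1(1) active_subset pmax_ge by blast
  ultimately show ?thesis using piece_value[OF i1(1)] i1(2) by linarith
qed

lemma mem_active_iff: "i \<in> active zb \<Longrightarrow> i \<in> active z \<longleftrightarrow> a i \<bullet> (z - zb) = dir_deriv zb (z - zb)"
  using pmax_eq_dir_deriv active_subset unfolding active_def by (auto simp: inner_diff_right)

lemma mem_tight_iff: "j \<in> tight zb \<Longrightarrow> j \<in> tight z \<longleftrightarrow> c j \<bullet> (z - zb) = 0"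
  unfolding tight_def by (auto simp: inner_diff_right)

lemma displacement_mem_tangent: "z - zb \<in> tangent zb"
  using z unfolding tangent_def tight_def feasible_def by (auto simp: inner_diff_right)

lemma tangent_subset: "tangent zb \<subseteq> tangent z"
  using tight_sub unfolding tangent_def by auto

lemma dir_deriv_mono: "dir_deriv z w \<le> dir_deriv zb w"
  unfolding dir_deriv_def using active_sub active_nonempty finite_active by (intro Max_mono) auto

lemma subdiff_subset: "subdiff f z \<subseteq> subdiff f zb"
  unfolding subdiff_eq using zb tangent_subset dir_deriv_mono by (auto intro: order_trans)

text \<open>The upper bound comes from \<open>\<partial>g(z) \<subseteq> \<partial>g(z\<^sub>b)\<close>, the lower bound from testing \<open>\<lambda> \<in> \<partial>g(z)\<close>
  with the tangent direction \<open>z\<^sub>b - z\<close> at \<open>z\<close>.\<close>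

lemma subdiff_inner_displacement:
  assumes l: "l \<in> subdiff f z"
  shows "l \<bullet> (z - zb) = dir_deriv zb (z - zb)"
proof -
  have le: "l \<bullet> (z - zb) \<le> dir_deriv zb (z - zb)"
    using l subdiff_subset displacement_mem_tangent by (blast intro: subdiff_le_dir_deriv)
  have "zb - z \<in> tangent z" using zb unfolding tangent_def tight_def feasible_def by (auto simp: inner_diff_right)
  then have "l \<bullet> (zb - z) \<le> dir_deriv z (zb - z)" by (rule subdiff_le_dir_deriv[OF l])
  also have "\<dots> \<le> - dir_deriv zb (z - zb)"
  proof (rule dir_deriv_le)
    fix i assume "i \<in> active z"
    then have "a i \<bullet> (z - zb) = dir_deriv zb (z - zb)" using mem_active_iff active_sub by blast
    then show "a i \<bullet> (zb - z) \<le> - dir_deriv zb (z - zb)" by (simp add: inner_diff_right)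
  qed
  finally show ?thesis using le by (simp add: inner_diff_right)
qed

lemma eventually_shift_mem_tangent:
  assumes w: "w \<in> tangent z"
  shows "eventually (\<lambda>s. w + s *\<^sub>R (z - zb) \<in> tangent zb) at_top"
proof -
  have "eventually (\<lambda>s. c j \<bullet> w + s * (c j \<bullet> (z - zb)) \<le> 0) at_top" if j: "j \<in> tight zb" for j
  proof (cases "j \<in> tight z")
    case True
    then show ?thesis using w mem_tight_iff[OF j] unfolding tangent_def by auto
  next
    case False
    then have "c j \<bullet> (z - zb) < 0"
      using mem_tight_iff[OF j] displacement_mem_tangent j unfolding tangent_def by force
    then show ?thesis by (rule eventually_affine_le_at_top)
  qed
  then have "eventually (\<lambda>s. \<forall>j\<in>tight zb. c j \<bullet> w + s * (c j \<bullet> (z - zb)) \<le> 0) at_top"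
    using finite_tight by (intro eventually_ball_finite) auto
  then show ?thesis by (rule eventually_mono) (simp add: tangent_def inner_add_right)
qed

lemma eventually_dir_deriv_shift_le:
  "eventually (\<lambda>s. dir_deriv zb (w + s *\<^sub>R (z - zb)) \<le> dir_deriv z w + s * dir_deriv zb (z - zb)) at_top"
proof -
  define v where "v = z - zb"
  have "eventually (\<lambda>s. 0 \<le> s \<longrightarrow> (a i \<bullet> w - dir_deriv z w) + s * (a i \<bullet> v - dir_deriv zb v) \<le> 0) at_top"
    if i: "i \<in> active zb" for i
  proof (cases "i \<in> active z")
    case True
    then have "a i \<bullet> w \<le> dir_deriv z w" "a i \<bullet> v = dir_deriv zb v"
      using dir_deriv_ge mem_active_iff[OF i] unfolding v_def by auto
    then show ?thesis by simp
  next
    case False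
    then have "a i \<bullet> v < dir_deriv zb v"
      using mem_active_iff[OF i] dir_deriv_ge[OF i, of v] unfolding v_def by fastforce
    then have "eventually (\<lambda>s. (a i \<bullet> w - dir_deriv z w) + s * (a i \<bullet> v - dir_deriv zb v) \<le> 0) at_top"
      by (intro eventually_affine_le_at_top) simp
    then show ?thesis by (rule eventually_mono) simp
  qed
  then have "eventually (\<lambda>s. \<forall>i\<in>active zb. 0 \<le> s \<longrightarrow>
      (a i \<bullet> w - dir_deriv z w) + s * (a i \<bullet> v - dir_deriv zb v) \<le> 0) at_top"
    using finite_active by (intro eventually_ball_finite) auto
  then show ?thesis using eventually_ge_at_top[of "0::real"]
  proof eventually_elim
    case (elim s)
    then show ?case unfolding v_def[symmetric]
      by (intro dir_deriv_le) (auto simp: inner_add_right algebra_simps)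
  qed
qed

lemma eventually_shift_mem_crit_cone:
  assumes l: "l \<in> subdiff f z" and w: "w \<in> crit_cone f z l"
  shows "eventually (\<lambda>s. w + s *\<^sub>R (z - zb) \<in> crit_cone f zb l) at_top"
proof -
  have wT: "w \<in> tangent z" and lw: "l \<bullet> w = dir_deriv z w" using w unfolding crit_cone_eq[OF z] by auto
  show ?thesis using eventually_shift_mem_tangent[OF wT] eventually_dir_deriv_shift_le[of w]
  proof eventually_elim
    case (elim s)
    have "l \<bullet> (w + s *\<^sub>R (z - zb)) \<le> dir_deriv zb (w + s *\<^sub>R (z - zb))"
      using l subdiff_subset elim(1) by (blast intro: subdiff_le_dir_deriv)
    moreover have "dir_deriv z w + s * dir_deriv zb (z - zb) = l \<bullet> (w + s *\<^sub>R (z - zb))"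
      using lw subdiff_inner_displacement[OF l] by (simp add: inner_add_right)
    ultimately show ?case using elim unfolding crit_cone_eq[OF zb] by auto
  qed
qed

lemma crit_cone_subset_differences:
  assumes l: "l \<in> subdiff f z" and face: "crit_cone f zb l \<subseteq> crit_cone f zb lb"
  shows "crit_cone f z l \<subseteq> {u - v | u v. u \<in> crit_cone f zb lb \<and> v \<in> crit_cone f zb lb}"
proof
  fix w assume w: "w \<in> crit_cone f z l"
  have "0 \<in> crit_cone f z l" unfolding crit_cone_eq[OF z] tangent_def by simp
  obtain s where "w + s *\<^sub>R (z - zb) \<in> crit_cone f zb l" "0 + s *\<^sub>R (z - zb) \<in> crit_cone f zb l"
    using eventually_happens'[OF trivial_limit_at_top_linorder
        eventually_conj[OF eventually_shift_mem_crit_cone[OF l w]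
                           eventually_shift_mem_crit_cone[OF l \<open>0 \<in> crit_cone f z l\<close>]]]
    by blast
  then have "w + s *\<^sub>R (z - zb) \<in> crit_cone f zb lb" "s *\<^sub>R (z - zb) \<in> crit_cone f zb lb"
    using face by auto
  moreover have "w = (w + s *\<^sub>R (z - zb)) - s *\<^sub>R (z - zb)" by simp
  ultimately show "w \<in> {u - v | u v. u \<in> crit_cone f zb lb \<and> v \<in> crit_cone f zb lb}" by blast
qed

lemma crit_cone_lineality_subset:
  assumes l: "l \<in> subdiff f z"
  shows "crit_cone f zb lb \<inter> uminus ` crit_cone f zb lb \<subseteq> crit_cone f z l"
proof
  fix w assume "w \<in> crit_cone f zb lb \<inter> uminus ` crit_cone f zb lb"
  then have w: "w \<in> tangent zb" "- w \<in> tangent zb" "lb \<bullet> w = dir_deriv zb w" "lb \<bullet> (- w) = dir_deriv zb (- w)"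
    unfolding crit_cone_eq[OF zb] by auto
  have "c j \<bullet> w = 0" if "j \<in> tight zb" for j
    using w(1,2) that unfolding tangent_def by force
  then have wz: "w \<in> tangent z" "- w \<in> tangent z" using tight_sub unfolding tangent_def by auto
  have "a i \<bullet> w = lb \<bullet> w" if "i \<in> active zb" for i
    using dir_deriv_ge[OF that, of w] dir_deriv_ge[OF that, of "- w"] w(3,4) by simp
  then have same: "a i \<bullet> w = lb \<bullet> w" if "i \<in> active z" for i using that active_sub by blast
  obtain i where "i \<in> active z" "a i \<bullet> w = dir_deriv z w" by (rule dir_deriv_attained)
  moreover obtain i' where "i' \<in> active z" "a i' \<bullet> (- w) = dir_deriv z (- w)" by (rule dir_deriv_attained)
  ultimately have "dir_deriv z w = lb \<bullet> w" "dir_deriv z (- w) = - (lb \<bullet> w)" using same by auto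
  moreover have "l \<bullet> w \<le> dir_deriv z w" "l \<bullet> (- w) \<le> dir_deriv z (- w)"
    using subdiff_le_dir_deriv[OF l wz(1)] subdiff_le_dir_deriv[OF l wz(2)] by simp_all
  ultimately show "w \<in> crit_cone f z l" using wz unfolding crit_cone_eq[OF z] by auto
qed

lemma rel_interior_indices_eq:
  assumes lb: "lb \<in> rel_interior (subdiff f zb)" and l: "l \<in> subdiff f z"
    and face: "crit_cone f zb l \<subseteq> crit_cone f zb lb"
  shows "active z = active zb" and "tight z = tight zb"
proof -
  have "z - zb \<in> crit_cone f zb l"
    using displacement_mem_tangent subdiff_inner_displacement[OF l] unfolding crit_cone_eq[OF zb] by simp
  then have d: "z - zb \<in> crit_cone f zb lb" using face by blast
  then have "lb \<bullet> (z - zb) = dir_deriv zb (z - zb)" unfolding crit_cone_eq[OF zb] by simp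
  then have "active zb \<subseteq> active z"
    using active_inner_eq[OF zb lb d] mem_active_iff by auto
  then show "active z = active zb" using active_sub by blast
  have "tight zb \<subseteq> tight z"
    using tight_inner_eq[OF zb lb d] mem_tight_iff by auto
  then show "tight z = tight zb" using tight_sub by blast
qed

end

lemma eventually_crit_cone_bounds:
  assumes zb: "zb \<in> feasible"
  shows "eventually (\<lambda>(z, l). l \<in> subdiff f z \<longrightarrow>
            crit_cone f z l \<subseteq> {u - v | u v. u \<in> crit_cone f zb lb \<and> v \<in> crit_cone f zb lb} \<and>
            crit_cone f zb lb \<inter> uminus ` crit_cone f zb lb \<subseteq> crit_cone f z l) (nhds (zb, lb))"
  using eventually_nhds_Pair[OF eventually_active_tight_subset[OF zb] eventually_crit_cone_subset[OF zb]]
proof (rule eventually_mono, clarify)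
  fix z l
  assume near: "active z \<subseteq> active zb" "tight z \<subseteq> tight zb"
    and face: "l \<in> subdiff f zb \<longrightarrow> crit_cone f zb l \<subseteq> crit_cone f zb lb"
    and l: "l \<in> subdiff f z"
  have z: "z \<in> feasible" using l by (rule subdiff_imp_feasible)
  have "crit_cone f zb l \<subseteq> crit_cone f zb lb" using face subdiff_subset[OF zb z near] l by blast
  then show "crit_cone f z l \<subseteq> {u - v | u v. u \<in> crit_cone f zb lb \<and> v \<in> crit_cone f zb lb} \<and>
      crit_cone f zb lb \<inter> uminus ` crit_cone f zb lb \<subseteq> crit_cone f z l"
    using crit_cone_subset_differences[OF zb z near l] crit_cone_lineality_subset[OF zb z near l] by blast
qed

lemma eventually_rel_interior_crit_cone_eq:
  assumes lb: "lb \<in> rel_interior (subdiff f zb)"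
  shows "eventually (\<lambda>(z, l). l \<in> subdiff f z \<longrightarrow>
            l \<in> rel_interior (subdiff f z) \<and> crit_cone f z l = crit_cone f zb lb) (nhds (zb, lb))"
proof -
  have zb: "zb \<in> feasible" using lb rel_interior_subset subdiff_imp_feasible by blast
  show ?thesis
    using eventually_nhds_Pair[OF eventually_active_tight_subset[OF zb]
        eventually_conj[OF eventually_crit_cone_subset[OF zb] eventually_mem_rel_interior[OF lb]]]
  proof (rule eventually_mono, clarify)
    fix z l
    assume near: "active z \<subseteq> active zb" "tight z \<subseteq> tight zb"
      and face: "l \<in> subdiff f zb \<longrightarrow> crit_cone f zb l \<subseteq> crit_cone f zb lb"
      and ri: "l \<in> subdiff f zb \<longrightarrow> l \<in> rel_interior (subdiff f zb)"
      and l: "l \<in> subdiff f z"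
    have z: "z \<in> feasible" using l by (rule subdiff_imp_feasible)
    have l_zb: "l \<in> subdiff f zb" using subdiff_subset[OF zb z near] l by blast
    with face have face: "crit_cone f zb l \<subseteq> crit_cone f zb lb" by blast
    have "tangent z = tangent zb" "dir_deriv z = dir_deriv zb"
      using rel_interior_indices_eq[OF zb z near lb l face]
      unfolding tangent_def dir_deriv_def[abs_def] by simp_all
    then have subdiff_z: "subdiff f z = subdiff f zb" and crit_z: "crit_cone f z l = crit_cone f zb l"
      unfolding subdiff_eq crit_cone_eq[OF z] crit_cone_eq[OF zb] using z zb by auto
    have "crit_cone f zb lb \<subseteq> crit_cone f z l"
      using crit_cone_lineality_subset[OF zb z near l] rel_interior_crit_cone_uminus[OF zb lb]
      by (force simp: image_iff)
    then show "l \<in> rel_interior (subdiff f z) \<and> crit_cone f z l = crit_cone f zb lb"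
      using ri l_zb face subdiff_z crit_z by auto
  qed
qed

end

lemma proper_fun_finite_value:
  assumes "proper_fun g"
  obtains x t where "g x = ereal t"
proof -
  obtain x where "g x \<noteq> \<infinity>" "g x \<noteq> -\<infinity>" using assms unfolding proper_fun_def by blast
  then show ?thesis using that by (cases "g x") auto
qed

lemma polyhedron_epigraph_halfspaces:
  fixes g :: "'a::euclidean_space \<Rightarrow> ereal"
  assumes "polyhedron (epigraph g)"
  obtains F :: "('a \<times> real) set set" and u :: "('a \<times> real) set \<Rightarrow> 'a" and s B :: "('a \<times> real) set \<Rightarrow> real"
  where "finite F" and "\<And>x t. g x \<le> ereal t \<longleftrightarrow> (\<forall>h\<in>F. u h \<bullet> x + s h * t \<le> B h)"
proof -
  obtain F where F: "finite F" "epigraph g = \<Inter>F" and halfspace: "\<forall>h\<in>F. \<exists>n \<beta>. n \<noteq> 0 \<and> h = {p. n \<bullet> p \<le> \<beta>}"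
    using assms unfolding polyhedron_def by blast
  then obtain n B where nB: "\<And>h. h \<in> F \<Longrightarrow> h = {p. n h \<bullet> p \<le> B h}" by metis
  have "g x \<le> ereal t \<longleftrightarrow> (\<forall>h\<in>F. fst (n h) \<bullet> x + snd (n h) * t \<le> B h)" for x t
  proof -
    have "g x \<le> ereal t \<longleftrightarrow> (\<forall>h\<in>F. (x, t) \<in> h)" using F(2) unfolding epigraph_def by blast
    also have "\<dots> \<longleftrightarrow> (\<forall>h\<in>F. n h \<bullet> (x, t) \<le> B h)" using nB by blast
    finally show ?thesis by (simp add: inner_prod_def mult.commute)
  qed
  with F(1) show ?thesis by (rule that)
qed

lemma slope_nonpos_if_bounded_above:
  fixes s t0 \<alpha> B :: real
  assumes "\<And>t. t0 \<le> t \<Longrightarrow> \<alpha> + s * t \<le> B"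
  shows "s \<le> 0"
proof (rule ccontr)
  assume "\<not> s \<le> 0"
  then have s: "0 < s" by simp
  define t where "t = max t0 ((B - \<alpha>) / s + 1)"
  have "\<alpha> + s * t \<le> B" using assms unfolding t_def by simp
  moreover have "(B - \<alpha>) / s + 1 \<le> t" unfolding t_def by simp
  then have "B - \<alpha> + s \<le> s * t" using s by (simp add: field_simps)
  ultimately show False using s by linarith
qed

text \<open>The halfspaces of the epigraph whose normal has no \<open>t\<close>-component cut out the domain; dividing
  the others by their (negative) \<open>t\<close>-coefficient gives the affine pieces.\<close>

lemma polyhedral_fun_sublevel_affine:
  fixes g :: "'a::euclidean_space \<Rightarrow> ereal"
  assumes "proper_fun g" and "polyhedron (epigraph g)"
  obtains I J :: "('a \<times> real) set set" and c d and a :: "('a \<times> real) set \<Rightarrow> 'a" and b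
  where "finite I" and "finite J"
    and "\<And>x t. g x \<le> ereal t \<longleftrightarrow> x \<in> {x. \<forall>j\<in>J. c j \<bullet> x \<le> d j} \<and> (\<forall>i\<in>I. a i \<bullet> x + b i \<le> t)"
proof -
  obtain F :: "('a \<times> real) set set" and u s B where F: "finite F"
    and epi: "\<And>x t. g x \<le> ereal t \<longleftrightarrow> (\<forall>h\<in>F. u h \<bullet> x + s h * t \<le> B h)"
    using polyhedron_epigraph_halfspaces[OF assms(2)] by blast
  obtain x0 t0 where t0: "g x0 = ereal t0" using assms(1) by (rule proper_fun_finite_value)
  have s_nonpos: "s h \<le> 0" if "h \<in> F" for h
    using epi[of x0] t0 that by (intro slope_nonpos_if_bounded_above[of t0 "u h \<bullet> x0"]) auto
  define I where "I = {h\<in>F. s h < 0}"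
  define J where "J = {h\<in>F. s h = 0}"
  define a where "a h = (- 1 / s h) *\<^sub>R u h" for h
  define b where "b h = B h / s h" for h
  have "u h \<bullet> x + s h * t \<le> B h \<longleftrightarrow> a h \<bullet> x + b h \<le> t" if "h \<in> I" for h x t
  proof -
    have "s h < 0" using that unfolding I_def by simp
    moreover have "a h \<bullet> x + b h = (B h - u h \<bullet> x) / s h" unfolding a_def b_def by (simp add: diff_divide_distrib)
    ultimately show ?thesis by (simp add: divide_le_eq algebra_simps)
  qed
  moreover have "u h \<bullet> x + s h * t \<le> B h \<longleftrightarrow> u h \<bullet> x \<le> B h" if "h \<in> J" for h x t
    using that unfolding J_def by simp
  moreover have "F = I \<union> J" unfolding I_def J_def using s_nonpos by force
  ultimately have "g x \<le> ereal t \<longleftrightarrow>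
      x \<in> {x. \<forall>j\<in>J. u j \<bullet> x \<le> B j} \<and> (\<forall>i\<in>I. a i \<bullet> x + b i \<le> t)" for x t
    unfolding epi mem_Collect_eq by blast
  moreover have "finite I" "finite J" using F unfolding I_def J_def by auto
  ultimately show ?thesis using that by blast
qed

lemma eq_max_affine_if_sublevel_iff:
  fixes g :: "'a::real_inner \<Rightarrow> ereal" and I :: "'i set"
  assumes I: "finite I" "I \<noteq> {}" and not_minf: "g x \<noteq> -\<infinity>"
    and sublevel: "\<And>t. g x \<le> ereal t \<longleftrightarrow> x \<in> D \<and> (\<forall>i\<in>I. a i \<bullet> x + b i \<le> t)"
  shows "g x = (if x \<in> D then ereal (Max ((\<lambda>i. a i \<bullet> x + b i) ` I)) else \<infinity>)"
proof (cases "x \<in> D")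
  case True
  define M where "M = Max ((\<lambda>i. a i \<bullet> x + b i) ` I)"
  have le: "g x \<le> ereal M" using sublevel True I(1) unfolding M_def by simp
  with not_minf obtain r where r: "g x = ereal r" by (cases "g x") auto
  then have "M \<le> r" using sublevel[of r] I unfolding M_def by simp
  then show ?thesis using le r True M_def by simp
next
  case False
  then have "g x \<noteq> ereal t" for t using sublevel[of t] by auto
  with not_minf have "g x = \<infinity>" by (cases "g x") auto
  then show ?thesis using False by simp
qed

lemma polyhedral_fun_max_affine:
  fixes g :: "'a::euclidean_space \<Rightarrow> ereal"
  assumes "polyhedral_fun g"
  obtains I J :: "('a \<times> real) set set" and a :: "('a \<times> real) set \<Rightarrow> 'a" and b
    and c :: "('a \<times> real) set \<Rightarrow> 'a" and d
  where "max_affine_polyhedral I J" and "g = max_affine_polyhedral.f I J a b c d"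
proof -
  have proper: "proper_fun g" and epi: "polyhedron (epigraph g)"
    using assms unfolding polyhedral_fun_def by auto
  obtain x0 t0 where t0: "g x0 = ereal t0" using proper by (rule proper_fun_finite_value)
  have not_minf: "g x \<noteq> -\<infinity>" for x using proper unfolding proper_fun_def by auto
  show ?thesis
  proof (rule polyhedral_fun_sublevel_affine[OF proper epi])
    fix I J :: "('a \<times> real) set set" and c d and a :: "('a \<times> real) set \<Rightarrow> 'a" and b
    assume finite: "finite I" "finite J"
      and sublevel: "\<And>x t. g x \<le> ereal t \<longleftrightarrow> x \<in> {x. \<forall>j\<in>J. c j \<bullet> x \<le> d j} \<and> (\<forall>i\<in>I. a i \<bullet> x + b i \<le> t)"
    have "I \<noteq> {}"
    proof
      assume "I = {}"
      then have "g x0 \<le> ereal (t0 - 1)" using sublevel[of x0 t0] sublevel[of x0 "t0 - 1"] t0 by simp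
      then show False using t0 by simp
    qed
    with finite have repr: "max_affine_polyhedral I J" by (simp add: max_affine_polyhedral_def)
    interpret max_affine_polyhedral I J a b c d by (rule repr)
    have "g x = f x" for x
      using eq_max_affine_if_sublevel_iff[where g = g and a = a and b = b,
          OF finite(1) \<open>I \<noteq> {}\<close> not_minf[of x] sublevel[of x]]
      unfolding f_def feasible_def pmax_def by simp
    then have "g = f" ..
    with repr show ?thesis by (rule that)
  qed
qed

theorem corollary3p4:
  fixes g :: "'a::euclidean_space \<Rightarrow> ereal" and zb lb :: 'a
  assumes "polyhedral_fun g" and "lb \<in> subdiff g zb"
  shows "(\<exists>r>0. \<forall>z l. (z, l) \<in> cball (zb, lb) r \<and> l \<in> subdiff g z \<longrightarrow>
            crit_cone g z l \<subseteq> {a - b | a b. a \<in> crit_cone g zb lb \<and> b \<in> crit_cone g zb lb} \<and>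
            crit_cone g zb lb \<inter> uminus ` crit_cone g zb lb \<subseteq> crit_cone g z l)
       \<and> (lb \<in> rel_interior (subdiff g zb) \<longrightarrow>
          (\<exists>r>0. \<forall>z l. (z, l) \<in> cball (zb, lb) r \<and> l \<in> subdiff g z \<longrightarrow>
            l \<in> rel_interior (subdiff g z) \<and> crit_cone g z l = crit_cone g zb lb))"
proof -
  obtain I J :: "('a \<times> real) set set" and a b c d
    where repr: "max_affine_polyhedral I J" and g: "g = max_affine_polyhedral.f I J a b c d"
    using assms(1) by (rule polyhedral_fun_max_affine)
  interpret max_affine_polyhedral I J a b c d by (rule repr)
  have zb: "zb \<in> feasible" using assms(2) unfolding g by (rule subdiff_imp_feasible)
  show ?thesis
    unfolding g
    by (intro conjI impI eventually_nhds_Pair_imp_cball eventually_crit_cone_bounds[OF zb]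
        eventually_rel_interior_crit_cone_eq)
qed

end
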